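(* Let $k>t$ and $n>2k-t$, and let $\Gamma$ be a $(t+2)$-space in $\mathrm{PG}(n,q)$. Let $\mathcal{S}$ be the set of all $k$-spaces of $\mathrm{PG}(n,q)$ meeting $\Gamma$ in at least a $(t+1)$-space. Then $\mathcal{S}$ is a maximal set of $k$-spaces pairwise intersecting in at least a $t$-space, and \[|\mathcal{S}|=\left[{n-t-2\atop k-t-2}\right]_q\left(1+\theta_{t+2}q^{k-t-1}\frac{q^{n-k}-1}{q^{k-t-1}-1}\right).\]
   Context: $k$-spaces are projective subspaces of dimension $k$; "intersecting in at least a $t$-space" means the intersection has projective dimension at least $t$. Maximal means no further $k$-space can be added while keeping the property. $\left[{n\atop k}\right]_q=\frac{(q^n-1)\cdots(q^{n-k+1}-1)}{(q^k-1)\cdots(q-1)}$ for $k>0$, $=1$ for $k=0$; $\theta_m=\frac{q^{m+1}-1}{q-1}$. *)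

theory Defs
  imports "HOL-Analysis.Analysis"
begin

text \<open>PG(n,q) is modelled by the vector space 'a^'m over the finite field 'a
  (q = CARD('a)), with CARD('m) = n+1. A projective k-space is a vector
  subspace of (vector) dimension k+1.\<close>

definition pspace :: "nat \<Rightarrow> ('a::field ^ 'm) set \<Rightarrow> bool" where
  "pspace k S \<longleftrightarrow> vec.subspace S \<and> vec.dim S = k + 1"

definition meets_in_at_least :: "nat \<Rightarrow> ('a::field ^ 'm) set \<Rightarrow> ('a ^ 'm) set \<Rightarrow> bool" where
  "meets_in_at_least t S T \<longleftrightarrow> vec.dim (S \<inter> T) \<ge> t + 1"

definition t_intersecting :: "nat \<Rightarrow> nat \<Rightarrow> ('a::field ^ 'm) set set \<Rightarrow> bool" where
  "t_intersecting k t F \<longleftrightarrow> (\<forall>S\<in>F. pspace k S) \<and>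
     (\<forall>S\<in>F. \<forall>T\<in>F. meets_in_at_least t S T)"

definition maximal_t_intersecting :: "nat \<Rightarrow> nat \<Rightarrow> ('a::field ^ 'm) set set \<Rightarrow> bool" where
  "maximal_t_intersecting k t F \<longleftrightarrow> t_intersecting k t F \<and>
     (\<forall>K. pspace k K \<and> K \<notin> F \<longrightarrow> \<not> t_intersecting k t (insert K F))"

definition qbinom :: "real \<Rightarrow> nat \<Rightarrow> nat \<Rightarrow> real" where
  "qbinom q n k = (if k = 0 then 1
     else (\<Prod>i<k. (q ^ (n - i) - 1)) / (\<Prod>i<k. (q ^ (k - i) - 1)))"

definition theta :: "real \<Rightarrow> nat \<Rightarrow> real" where
  "theta q m = (q ^ (m + 1) - 1) / (q - 1)"

end

theory Submission
  imports Defs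
begin

text \<open>
  In vector dimensions, \<open>\<Gamma>\<close> has dimension \<open>t + 3\<close> and a member \<open>K\<close> of the family has
  dimension \<open>k + 1\<close> and contains a hyperplane of \<open>\<Gamma>\<close>. Two members therefore meet inside
  \<open>\<Gamma>\<close> in dimension at least \<open>t + 1\<close> by the dimension formula. If \<open>K\<close> is not a member,
  then \<open>dim (K \<inter> \<Gamma>) \<le> t + 1\<close>, so some hyperplane \<open>H\<close> of \<open>\<Gamma>\<close> meets \<open>K\<close> in
  dimension at most \<open>t\<close>; extending \<open>H\<close> in general position with respect to \<open>K\<close> gives a
  member \<open>K'\<close> with \<open>dim (K \<inter> K') \<le> max t (2k + 1 - n)\<close>, which is at most \<open>t\<close>
  because \<open>n > 2k - t\<close>.

  For the size: the \<open>d\<close>-dimensional subspaces between \<open>W\<close> and \<open>V\<close> are counted by a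
  Gaussian binomial, by counting in two ways the sequences of vectors that extend \<open>W\<close>
  independently. A member either contains \<open>\<Gamma>\<close> or meets \<open>\<Gamma>\<close> in exactly one of its
  \<open>theta (t + 2)\<close> hyperplanes, so \<open>|S| = A + theta (t + 2) * (B - A)\<close> with \<open>A\<close> the number
  of \<open>k\<close>-spaces through \<open>\<Gamma>\<close> and \<open>B\<close> the number through a fixed hyperplane of \<open>\<Gamma>\<close>.
\<close>

section \<open>Subspaces over a finite field\<close>

lemma scale_in_span_iff:
  fixes x :: "'a::field ^ 'm"
  assumes "c \<noteq> 0"
  shows "c *s x \<in> vec.span S \<longleftrightarrow> x \<in> vec.span S"
proof
  assume "c *s x \<in> vec.span S"
  moreover have "x = inverse c *s (c *s x)"
    using assms by (simp only: vec.scale_scale) simp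
  ultimately show "x \<in> vec.span S"
    by (metis vec.span_scale)
qed (rule vec.span_scale)

lemma card_span_insert:
  fixes x :: "'a::{finite,field} ^ 'm"
  assumes "x \<notin> vec.span B"
  shows "card (vec.span (insert x B)) = CARD('a) * card (vec.span B)"
proof -
  let ?f = "\<lambda>(c, y). c *s x + y"
  have "inj_on ?f (UNIV \<times> vec.span B)"
  proof (rule inj_onI, clarsimp)
    fix c c' y y'
    assume y: "y \<in> vec.span B" "y' \<in> vec.span B" and eq: "c *s x + y = c' *s x + y'"
    then have "(c - c') *s x = y' - y"
      by (simp add: algebra_simps vector_sub_rdistrib)
    then have "(c - c') *s x \<in> vec.span B"
      using vec.span_diff[OF y(2,1)] by simp
    then have "c = c'"
      using assms scale_in_span_iff[of "c - c'" x B] by auto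
    then show "c = c' \<and> y = y'" using eq by simp
  qed
  moreover have "?f ` (UNIV \<times> vec.span B) = vec.span (insert x B)"
  proof
    have "x \<in> vec.span (insert x B)" "vec.span B \<subseteq> vec.span (insert x B)"
      by (simp_all add: vec.span_base vec.span_mono subset_insertI)
    then show "?f ` (UNIV \<times> vec.span B) \<subseteq> vec.span (insert x B)"
      by (auto intro!: vec.span_add vec.span_scale)
    show "vec.span (insert x B) \<subseteq> ?f ` (UNIV \<times> vec.span B)"
    proof
      fix z assume "z \<in> vec.span (insert x B)"
      then obtain c where "z - c *s x \<in> vec.span B"
        by (auto simp: vec.span_insert)
      then show "z \<in> ?f ` (UNIV \<times> vec.span B)"
        by (intro image_eqI[of _ _ "(c, z - c *s x)"]) auto
    qed
  qed
  ultimately show ?thesis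
    using card_image card_cartesian_product by fastforce
qed

lemma card_span_independent:
  fixes B :: "('a::{finite,field} ^ 'm) set"
  assumes "vec.independent B"
  shows "card (vec.span B) = CARD('a) ^ card B"
proof -
  have "finite B" using assms vec.finiteI_independent by blast
  then show ?thesis using assms
  proof (induction B rule: finite_induct)
    case (insert x F)
    then have "vec.independent F" "x \<notin> vec.span F"
      by (auto simp: vec.independent_insert)
    then show ?case
      using insert card_span_insert[of x F] by simp
  qed simp
qed

lemma card_subspace:
  fixes S :: "('a::{finite,field} ^ 'm) set"
  assumes "vec.subspace S"
  shows "card S = CARD('a) ^ vec.dim S"
proof -
  obtain B where B: "B \<subseteq> S" "vec.independent B" "S \<subseteq> vec.span B" "card B = vec.dim S"
    using vec.basis_exists by blast
  then have "vec.span B = S"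
    using assms vec.span_subspace by blast
  then show ?thesis
    using card_span_independent[OF B(2)] B(4) by simp
qed

lemma one_less_card_field: "1 < CARD('a::{finite,field})"
proof -
  have "card {0::'a, 1} \<le> CARD('a)"
    by (rule card_mono) simp_all
  then show ?thesis by simp
qed

lemma dim_Un_Int:
  fixes S T :: "('a::field ^ 'm) set"
  assumes "vec.subspace S" "vec.subspace T"
  shows "vec.dim (S \<union> T) + vec.dim (S \<inter> T) = vec.dim S + vec.dim T"
proof -
  have span: "vec.span S = S" "vec.span T = T"
    using assms by simp_all
  have "vec.span (S \<union> T) = {x + y |x y. x \<in> S \<and> y \<in> T}"
    using vec.span_Un[of S T] unfolding span .
  then show ?thesis
    using vec.dim_sums_Int[OF assms] vec.dim_span[of "S \<union> T"] by simp
qed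

lemma dim_Int_lower_bound:
  fixes S T :: "('a::field ^ 'm) set"
  assumes "vec.subspace S" "vec.subspace T" "S \<subseteq> U" "T \<subseteq> U"
  shows "vec.dim S + vec.dim T \<le> vec.dim U + vec.dim (S \<inter> T)"
  using dim_Un_Int[OF assms(1,2)] vec.dim_subset[of "S \<union> T" U] assms(3,4) by simp

lemma dim_less_if_psubset:
  fixes S T :: "('a::field ^ 'm) set"
  assumes "vec.subspace S" "vec.subspace T" "S \<subset> T"
  shows "vec.dim S < vec.dim T"
proof -
  have span: "vec.span S = S" "vec.span T = T"
    using assms by simp_all
  show ?thesis
    using vec.dim_psubset[of S T] assms(3) unfolding span by blast
qed

section \<open>Counting subspaces by Gaussian binomials\<close>

definition subspaces_between ::
  "('a::field ^ 'm) set \<Rightarrow> ('a ^ 'm) set \<Rightarrow> nat \<Rightarrow> ('a ^ 'm) set set" where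
  "subspaces_between W V d = {S. vec.subspace S \<and> W \<subseteq> S \<and> S \<subseteq> V \<and> vec.dim S = d}"

fun independent_extensions ::
  "('a::field ^ 'm) set \<Rightarrow> ('a ^ 'm) set \<Rightarrow> nat \<Rightarrow> ('a ^ 'm) list set" where
  "independent_extensions V W 0 = {[]}"
| "independent_extensions V W (Suc r) =
     (\<lambda>(xs, x). xs @ [x]) ` (SIGMA xs:independent_extensions V W r. V - vec.span (W \<union> set xs))"

lemma independent_extensions_dim:
  assumes "xs \<in> independent_extensions V W r"
  shows "set xs \<subseteq> V \<and> vec.dim (W \<union> set xs) = vec.dim W + r"
  using assms
proof (induction r arbitrary: xs)
  case (Suc r)
  then obtain ys x where ys: "ys \<in> independent_extensions V W r" "x \<in> V"
      "x \<notin> vec.span (W \<union> set ys)" "xs = ys @ [x]"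
    by auto
  then have "W \<union> set xs = insert x (W \<union> set ys)" by auto
  then show ?case
    using Suc.IH[OF ys(1)] ys(2,3,4) by (simp add: vec.dim_insert)
qed simp

lemma finite_independent_extensions:
  "finite (independent_extensions (V :: ('a::{finite,field} ^ 'm) set) W r)"
  by (induction r) auto

lemma independent_extensions_restrict:
  assumes "S \<subseteq> V"
  shows "independent_extensions S W r = {xs \<in> independent_extensions V W r. set xs \<subseteq> S}"
  using assms by (induction r) auto

lemma card_independent_extensions:
  fixes V W :: "('a::{finite,field} ^ 'm) set"
  assumes "vec.subspace V" "W \<subseteq> V"
  shows "card (independent_extensions V W r)
    = (\<Prod>i<r. CARD('a) ^ vec.dim V - CARD('a) ^ (vec.dim W + i))"
proof (induction r)
  case (Suc r)
  let ?E = "independent_extensions V W r"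
  let ?S = "SIGMA xs:?E. V - vec.span (W \<union> set xs)"
  have card_choices: "card (V - vec.span (W \<union> set xs))
      = CARD('a) ^ vec.dim V - CARD('a) ^ (vec.dim W + r)" if "xs \<in> ?E" for xs
  proof -
    have "set xs \<subseteq> V" and dim: "vec.dim (W \<union> set xs) = vec.dim W + r"
      using independent_extensions_dim[OF that] by auto
    then have "vec.span (W \<union> set xs) \<subseteq> V"
      using assms by (simp add: vec.span_minimal)
    then show ?thesis
      using card_subspace[OF assms(1)] card_subspace[OF vec.subspace_span, of "W \<union> set xs"] dim
      by (simp add: card_Diff_subset)
  qed
  have "inj_on (\<lambda>(xs, x). xs @ [x]) ?S" by (auto simp: inj_on_def)
  then have "card (independent_extensions V W (Suc r)) = card ?S"
    by (simp add: card_image)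
  also have "\<dots> = (\<Sum>xs\<in>?E. card (V - vec.span (W \<union> set xs)))"
    by (simp add: finite_independent_extensions)
  also have "\<dots> = card ?E * (CARD('a) ^ vec.dim V - CARD('a) ^ (vec.dim W + r))"
    by (simp add: card_choices)
  finally show ?case
    using Suc.IH by simp
qed simp

lemma card_subspaces_between_mult:
  fixes V W :: "('a::{finite,field} ^ 'm) set"
  assumes "vec.subspace V" "W \<subseteq> V"
  shows "card (subspaces_between W V (vec.dim W + r))
      * (\<Prod>i<r. CARD('a) ^ (vec.dim W + r) - CARD('a) ^ (vec.dim W + i))
    = (\<Prod>i<r. CARD('a) ^ vec.dim V - CARD('a) ^ (vec.dim W + i))"
proof -
  let ?E = "independent_extensions V W r"
  let ?span = "\<lambda>xs. vec.span (W \<union> set xs)"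
  let ?B = "subspaces_between W V (vec.dim W + r)"
  have span_mem: "?span xs \<in> ?B" if "xs \<in> ?E" for xs
    using independent_extensions_dim[OF that] assms vec.span_superset[of "W \<union> set xs"]
    by (auto simp: subspaces_between_def vec.span_minimal)
  have fibre: "{xs \<in> ?E. ?span xs = S} = independent_extensions S W r" if "S \<in> ?B" for S
  proof -
    have S: "vec.subspace S" "W \<subseteq> S" "S \<subseteq> V" "vec.dim S = vec.dim W + r"
      using that by (auto simp: subspaces_between_def)
    have "?span xs = S" if "xs \<in> independent_extensions S W r" for xs
      using independent_extensions_dim[OF that] S vec.span_minimal[of "W \<union> set xs" S]
        vec.subspace_dim_equal[of "?span xs" S]
      by simp
    moreover have "set xs \<subseteq> S" if "?span xs = S" for xs
      using that vec.span_superset[of "W \<union> set xs"] by blast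
    ultimately show ?thesis
      using independent_extensions_restrict[OF S(3)] by blast
  qed
  have B: "finite ?B" "?span ` ?E \<subseteq> ?B"
    using span_mem by auto
  have "card ?E = (\<Sum>S\<in>?B. card {xs \<in> ?E. ?span xs = S})"
    using sum.group[OF finite_independent_extensions B, where h = "\<lambda>_. 1 :: nat"] by simp
  also have "\<dots> = (\<Sum>S\<in>?B. \<Prod>i<r. CARD('a) ^ (vec.dim W + r) - CARD('a) ^ (vec.dim W + i))"
    by (rule sum.cong) (auto simp: fibre card_independent_extensions subspaces_between_def)
  finally show ?thesis
    using card_independent_extensions[OF assms] by simp
qed

lemma of_nat_power_diff:
  assumes "b \<le> a" "1 \<le> q"
  shows "real (q ^ a - q ^ b) = real q ^ b * (real q ^ (a - b) - 1)"
proof -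
  have "q ^ b \<le> q ^ a"
    using assms by (simp add: power_increasing)
  then have "real (q ^ a - q ^ b) = real q ^ (b + (a - b)) - real q ^ b"
    using assms(1) by (simp add: of_nat_diff)
  then show ?thesis
    by (simp add: power_add algebra_simps)
qed

lemma card_subspaces_between:
  fixes V W :: "('a::{finite,field} ^ 'm) set"
  assumes "vec.subspace V" "W \<subseteq> V" "vec.dim W + r \<le> vec.dim V"
  shows "real (card (subspaces_between W V (vec.dim W + r)))
    = qbinom (real CARD('a)) (vec.dim V - vec.dim W) r"
proof -
  let ?q = "CARD('a)" and ?Q = "real CARD('a)" and ?w = "vec.dim W" and ?N = "vec.dim V"
  have factor: "real (?q ^ a - ?q ^ (?w + i)) = ?Q ^ (?w + i) * (?Q ^ (a - ?w - i) - 1)"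
    if "?w + i \<le> a" for a i
    using of_nat_power_diff[OF that] one_less_card_field[where 'a='a] by simp
  have "real (card (subspaces_between W V (?w + r))) * (\<Prod>i<r. ?Q ^ (?w + i))
      * (\<Prod>i<r. ?Q ^ (r - i) - 1)
    = (\<Prod>i<r. ?Q ^ (?w + i)) * (\<Prod>i<r. ?Q ^ (?N - ?w - i) - 1)"
    using arg_cong[OF card_subspaces_between_mult[OF assms(1,2), of r], of real] assms(3)
    by (simp add: factor prod.distrib mult.assoc)
  moreover have "1 < ?Q"
    using one_less_card_field[where 'a='a] by simp
  then have "?Q ^ (r - i) \<noteq> 1" if "i < r" for i
    using one_less_power[OF \<open>1 < ?Q\<close>, of "r - i"] that by linarith
  then have "(\<Prod>i<r. ?Q ^ (?w + i)) \<noteq> 0" "(\<Prod>i<r. ?Q ^ (r - i) - 1) \<noteq> 0"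
    using \<open>1 < ?Q\<close> by (simp_all add: prod_zero_iff)
  ultimately show ?thesis
    by (cases "r = 0") (simp_all add: qbinom_def field_simps)
qed

lemma qbinom_Suc_Suc:
  "qbinom q (Suc M) (Suc r) = qbinom q M r * (q ^ Suc M - 1) / (q ^ Suc r - 1)"
proof -
  have "(\<Prod>i<Suc r. q ^ (Suc M - i) - 1) = (q ^ Suc M - 1) * (\<Prod>i<r. q ^ (M - i) - 1)"
    by (subst prod.lessThan_Suc_shift) simp
  moreover have "(\<Prod>i<Suc r. q ^ (Suc r - i) - 1) = (q ^ Suc r - 1) * (\<Prod>i<r. q ^ (r - i) - 1)"
    by (subst prod.lessThan_Suc_shift) simp
  ultimately show ?thesis
    by (simp add: qbinom_def ac_simps)
qed

lemma qbinom_Suc_self: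
  assumes "1 < q"
  shows "qbinom q (Suc j) j = theta q j"
proof (induction j)
  case (Suc j)
  have "q ^ Suc j - 1 \<noteq> 0"
    using assms one_less_power[of q "Suc j"] by simp
  then show ?case
    using Suc by (simp add: qbinom_Suc_Suc theta_def)
qed (use assms in \<open>simp add: qbinom_def theta_def\<close>)

lemma card_subspaces_through:
  fixes W :: "('a::{finite,field} ^ 'm) set"
  assumes "vec.subspace W" "vec.dim W \<le> d" "d \<le> CARD('m)"
  shows "real (card (subspaces_between W UNIV d))
    = qbinom (real CARD('a)) (CARD('m) - vec.dim W) (d - vec.dim W)"
proof -
  have "vec.dim W + (d - vec.dim W) = d"
    using assms(2) by simp
  moreover have "vec.dim W + (d - vec.dim W) \<le> vec.dim (UNIV :: ('a ^ 'm) set)"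
    unfolding vec_dim_card using assms(2,3) by simp
  ultimately show ?thesis
    using card_subspaces_between[OF vec.subspace_UNIV subset_UNIV] by (metis vec_dim_card)
qed

lemma card_hyperplanes:
  fixes \<Gamma> :: "('a::{finite,field} ^ 'm) set"
  assumes "vec.subspace \<Gamma>" "vec.dim \<Gamma> = Suc g"
  shows "real (card (subspaces_between {0} \<Gamma> g)) = theta (real CARD('a)) g"
  using card_subspaces_between[OF assms(1), of "{0}" g] assms
    qbinom_Suc_self[of "real CARD('a)" g] one_less_card_field[where 'a='a]
  by (simp add: vec.subspace_0)

section \<open>The family is maximal\<close>

lemma exists_hyperplane_avoiding:
  fixes G :: "('a::field ^ 'm) set"
  assumes "vec.subspace G" "x \<in> G" "x \<noteq> 0"
  shows "\<exists>H. vec.subspace H \<and> H \<subseteq> G \<and> vec.dim H + 1 = vec.dim G \<and> x \<notin> H"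
proof -
  have "vec.independent {x}"
    using assms(3) by (simp add: vec.independent_insertI vec.span_empty)
  then obtain B where B: "x \<in> B" "B \<subseteq> G" "vec.independent B" "G \<subseteq> vec.span B"
    using vec.maximal_independent_subset_extend[of "{x}" G] assms(2) by auto
  define H where "H = vec.span (B - {x})"
  have "finite B"
    using B(3) vec.finiteI_independent by blast
  have "vec.span B = G"
    using B(2,4) assms(1) vec.span_subspace by blast
  then have "vec.dim G = card B"
    using vec.dim_span_eq_card_independent[OF B(3)] by simp
  moreover have "vec.dim H = card B - 1"
    using vec.dim_span_eq_card_independent[of "B - {x}"] vec.independent_mono[OF B(3)]
      \<open>finite B\<close> B(1) by (simp add: H_def)
  moreover have "card B \<noteq> 0"
    using \<open>finite B\<close> B(1) by auto
  moreover have "x \<notin> H"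
    using B(1,3) vec.dependent_def by (auto simp: H_def)
  moreover have "H \<subseteq> G"
    using B(2) assms(1) vec.span_minimal[of "B - {x}" G] by (auto simp: H_def)
  ultimately show ?thesis
    by (auto simp: H_def)
qed

lemma exists_hyperplane_meeting_less:
  fixes G K :: "('a::field ^ 'm) set"
  assumes G: "vec.subspace G" "0 < vec.dim G" and K: "vec.subspace K"
  shows "\<exists>H. vec.subspace H \<and> H \<subseteq> G \<and> vec.dim H + 1 = vec.dim G \<and>
    vec.dim (K \<inter> H) \<le> vec.dim (K \<inter> G) - 1"
proof (cases "K \<inter> G \<subseteq> {0}")
  case True
  have "\<not> G \<subseteq> {0}"
    using G(2) vec.dim_eq_0[of G] by (metis neq0_conv)
  then obtain x where "x \<in> G" "x \<noteq> 0"
    by auto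
  then obtain H where H: "vec.subspace H" "H \<subseteq> G" "vec.dim H + 1 = vec.dim G"
    using exists_hyperplane_avoiding[OF G(1)] by blast
  then have "K \<inter> H \<subseteq> {0}"
    using True by auto
  then show ?thesis
    using H by (auto simp flip: vec.dim_eq_0)
next
  case False
  then obtain x where x: "x \<in> K \<inter> G" "x \<noteq> 0" by auto
  then obtain H where H: "vec.subspace H" "H \<subseteq> G" "vec.dim H + 1 = vec.dim G" "x \<notin> H"
    using exists_hyperplane_avoiding[OF G(1)] by blast
  have "K \<inter> H \<subset> K \<inter> G"
    using H(2,4) x(1) by blast
  then have "vec.dim (K \<inter> H) < vec.dim (K \<inter> G)"
    using K H(1) G(1) by (intro dim_less_if_psubset) (auto intro: vec.subspace_inter)
  then show ?thesis
    using H by auto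
qed

text \<open>Each new vector is taken outside \<open>K + K'\<close> while that sum is a proper subspace, which
  leaves \<open>K \<inter> K'\<close> unchanged; once \<open>K + K'\<close> is the whole space, the dimension formula
  gives the second bound.\<close>

lemma exists_extension_general_position:
  fixes H K :: "('a::field ^ 'm) set"
  assumes H: "vec.subspace H" and K: "vec.subspace K" and r: "vec.dim H + r \<le> CARD('m)"
  shows "\<exists>K'. vec.subspace K' \<and> H \<subseteq> K' \<and> vec.dim K' = vec.dim H + r \<and>
    vec.dim (K \<inter> K') \<le> max (vec.dim (K \<inter> H)) (vec.dim K + vec.dim H + r - CARD('m))"
  using r
proof (induction r)
  case 0
  then show ?case using H by auto
next
  case (Suc r)
  then obtain K' where K': "vec.subspace K'" "H \<subseteq> K'" "vec.dim K' = vec.dim H + r"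
      and small: "vec.dim (K \<inter> K') \<le> max (vec.dim (K \<inter> H)) (vec.dim K + vec.dim H + r - CARD('m))"
    by auto
  have "vec.dim K' < vec.dim (UNIV :: ('a ^ 'm) set)"
    using K'(3) Suc.prems vec_dim_card[where 'a='a and 'n='m] by simp
  then have "K' \<noteq> UNIV" by auto
  moreover have "K' \<subseteq> vec.span (K \<union> K')"
    using vec.span_superset by blast
  ultimately obtain v where v: "v \<notin> K'"
    and v_general: "vec.span (K \<union> K') \<noteq> UNIV \<Longrightarrow> v \<notin> vec.span (K \<union> K')"
    by (cases "vec.span (K \<union> K') = UNIV") auto
  define K'' where "K'' = vec.span (insert v K')"
  have "vec.span K' = K'"
    using K'(1) by simp
  then have "v \<notin> vec.span K'"
    using v by argo
  then have K'': "vec.subspace K''" "K' \<subseteq> K''" "vec.dim K'' = vec.dim H + Suc r"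
    using K'(3) vec.span_superset[of "insert v K'"] by (auto simp: K''_def vec.dim_insert)
  have "vec.dim (K \<inter> K'') \<le> max (vec.dim (K \<inter> H)) (vec.dim K + vec.dim H + Suc r - CARD('m))"
  proof (cases "vec.span (K \<union> K') = UNIV")
    case True
    have "vec.dim (K \<union> K') \<le> vec.dim (K \<union> K'')"
      using K''(2) by (intro vec.dim_subset) auto
    moreover have "vec.dim (K \<union> K'') \<le> CARD('m)"
      using vec.dim_subset[of "K \<union> K''" UNIV] unfolding vec_dim_card by simp
    ultimately have "vec.dim (K \<union> K'') = CARD('m)"
      using True vec_dim_card[where 'a='a and 'n='m] vec.dim_span[of "K \<union> K'"] by simp
    then show ?thesis
      using dim_Un_Int[OF K K''(1)] K''(3) by simp
  next
    case False
    have "K \<inter> K'' \<subseteq> K'"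
    proof
      fix y assume y: "y \<in> K \<inter> K''"
      then obtain c where c: "y - c *s v \<in> K'"
        using vec.span_breakdown_eq[of y v K'] \<open>vec.span K' = K'\<close> by (auto simp: K''_def)
      have "c *s v = y - (y - c *s v)" by simp
      moreover have "y \<in> vec.span (K \<union> K')" "y - c *s v \<in> vec.span (K \<union> K')"
        using y c vec.span_superset[of "K \<union> K'"] by auto
      ultimately have "c *s v \<in> vec.span (K \<union> K')"
        using vec.span_diff by metis
      then have "c = 0"
        using v_general[OF False] scale_in_span_iff by blast
      then show "y \<in> K'"
        using c by simp
    qed
    then have "K \<inter> K'' = K \<inter> K'"
      using K''(2) by blast
    then show ?thesis
      using small by simp
  qed
  then show ?case
    using K'' K'(2) by blast
qed

lemma t_intersecting_meeting_family:
  fixes \<Gamma> :: "('a::field ^ 'm) set"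
  assumes "pspace (t + 2) \<Gamma>"
  shows "t_intersecting k t {K. pspace k K \<and> meets_in_at_least (t + 1) K \<Gamma>}"
  unfolding t_intersecting_def
proof (intro conjI ballI)
  fix K1 K2
  assume "K1 \<in> {K. pspace k K \<and> meets_in_at_least (t + 1) K \<Gamma>}"
    and "K2 \<in> {K. pspace k K \<and> meets_in_at_least (t + 1) K \<Gamma>}"
  then have "vec.subspace (K1 \<inter> \<Gamma>)" "vec.subspace (K2 \<inter> \<Gamma>)"
    "t + 2 \<le> vec.dim (K1 \<inter> \<Gamma>)" "t + 2 \<le> vec.dim (K2 \<inter> \<Gamma>)"
    using assms by (auto simp: pspace_def meets_in_at_least_def intro: vec.subspace_inter)
  then have "t + 1 \<le> vec.dim ((K1 \<inter> \<Gamma>) \<inter> (K2 \<inter> \<Gamma>))"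
    using dim_Int_lower_bound[of "K1 \<inter> \<Gamma>" "K2 \<inter> \<Gamma>" \<Gamma>] assms by (auto simp: pspace_def)
  moreover have "vec.dim ((K1 \<inter> \<Gamma>) \<inter> (K2 \<inter> \<Gamma>)) \<le> vec.dim (K1 \<inter> K2)"
    by (rule vec.dim_subset) auto
  ultimately show "meets_in_at_least t K1 K2"
    by (simp add: meets_in_at_least_def)
qed auto

lemma maximal_meeting_family:
  fixes \<Gamma> :: "('a::field ^ 'm) set"
  assumes ambient: "CARD('m) = n + 1" and "t < k" "2 * k < n + t" and \<Gamma>: "pspace (t + 2) \<Gamma>"
  shows "maximal_t_intersecting k t {K. pspace k K \<and> meets_in_at_least (t + 1) K \<Gamma>}"
  unfolding maximal_t_intersecting_def
proof (intro conjI allI impI)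
  show "t_intersecting k t {K. pspace k K \<and> meets_in_at_least (t + 1) K \<Gamma>}"
    using \<Gamma> by (rule t_intersecting_meeting_family)
  fix K
  assume "pspace k K \<and> K \<notin> {K. pspace k K \<and> meets_in_at_least (t + 1) K \<Gamma>}"
  then have K: "vec.subspace K" "vec.dim K = k + 1" and "vec.dim (K \<inter> \<Gamma>) \<le> t + 1"
    by (auto simp: pspace_def meets_in_at_least_def)
  have \<Gamma>_sub: "vec.subspace \<Gamma>" "vec.dim \<Gamma> = t + 3"
    using \<Gamma> by (auto simp: pspace_def)
  obtain H where H: "vec.subspace H" "H \<subseteq> \<Gamma>" "vec.dim H = t + 2" "vec.dim (K \<inter> H) \<le> t"
    using exists_hyperplane_meeting_less[OF \<Gamma>_sub(1) _ K(1)] \<Gamma>_sub(2)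
      \<open>vec.dim (K \<inter> \<Gamma>) \<le> t + 1\<close> by fastforce
  obtain K' where K': "vec.subspace K'" "H \<subseteq> K'" "vec.dim K' = k + 1" "vec.dim (K \<inter> K') \<le> t"
    using exists_extension_general_position[OF H(1) K(1), of "k - t - 1"] H(3,4) K(2) ambient assms(2,3)
    by auto
  have "vec.dim H \<le> vec.dim (K' \<inter> \<Gamma>)"
    using H(2) K'(2) by (intro vec.dim_subset) auto
  then have "K' \<in> {K. pspace k K \<and> meets_in_at_least (t + 1) K \<Gamma>}"
    using K'(1,3) H(3) by (simp add: pspace_def meets_in_at_least_def)
  moreover have "\<not> meets_in_at_least t K K'"
    using K'(4) by (simp add: meets_in_at_least_def)
  ultimately show "\<not> t_intersecting k t (insert K {K. pspace k K \<and> meets_in_at_least (t + 1) K \<Gamma>})"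
    unfolding t_intersecting_def by blast
qed

section \<open>The size of the family\<close>

lemma Int_eq_hyperplane:
  fixes \<Gamma> :: "('a::field ^ 'm) set"
  assumes \<Gamma>: "vec.subspace \<Gamma>" "vec.dim \<Gamma> = Suc g"
    and "H \<in> subspaces_between {0} \<Gamma> g"
    and "K \<in> subspaces_between H UNIV d - subspaces_between \<Gamma> UNIV d"
  shows "K \<inter> \<Gamma> = H"
proof -
  have H: "vec.subspace H" "H \<subseteq> K \<inter> \<Gamma>" "vec.dim H = g"
    and K: "vec.subspace K" "\<not> \<Gamma> \<subseteq> K"
    using assms(3,4) by (auto simp: subspaces_between_def)
  have "K \<inter> \<Gamma> \<subset> \<Gamma>"
    using K(2) by blast
  then have "vec.dim (K \<inter> \<Gamma>) \<le> vec.dim H"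
    using dim_less_if_psubset[OF vec.subspace_inter[OF K(1) \<Gamma>(1)] \<Gamma>(1)] \<Gamma>(2) H(3) by simp
  then show ?thesis
    using vec.subspace_dim_equal[OF H(1) vec.subspace_inter[OF K(1) \<Gamma>(1)] H(2)] by simp
qed

lemma subspaces_meeting_in_hyperplane_eq:
  fixes \<Gamma> :: "('a::field ^ 'm) set"
  assumes \<Gamma>: "vec.subspace \<Gamma>" "vec.dim \<Gamma> = Suc g"
  shows "{K. vec.subspace K \<and> vec.dim K = d \<and> g \<le> vec.dim (K \<inter> \<Gamma>)}
    = subspaces_between \<Gamma> UNIV d \<union>
      (\<Union>H\<in>subspaces_between {0} \<Gamma> g. subspaces_between H UNIV d - subspaces_between \<Gamma> UNIV d)"
    (is "?S = ?A \<union> (\<Union>H\<in>?Hyp. ?F H - ?A)")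
proof
  show "?S \<subseteq> ?A \<union> (\<Union>H\<in>?Hyp. ?F H - ?A)"
  proof
    fix K assume K: "K \<in> ?S"
    show "K \<in> ?A \<union> (\<Union>H\<in>?Hyp. ?F H - ?A)"
    proof (cases "\<Gamma> \<subseteq> K")
      case False
      have "vec.subspace (K \<inter> \<Gamma>)"
        using K \<Gamma>(1) by (auto intro: vec.subspace_inter)
      moreover have "K \<inter> \<Gamma> \<subset> \<Gamma>"
        using False by blast
      ultimately have "vec.dim (K \<inter> \<Gamma>) = g"
        using dim_less_if_psubset[of "K \<inter> \<Gamma>" \<Gamma>] \<Gamma> K by simp
      then have "K \<inter> \<Gamma> \<in> ?Hyp"
        using \<open>vec.subspace (K \<inter> \<Gamma>)\<close> vec.subspace_0[OF \<open>vec.subspace (K \<inter> \<Gamma>)\<close>]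
        by (simp add: subspaces_between_def)
      moreover have "K \<in> ?F (K \<inter> \<Gamma>) - ?A"
        using K False by (auto simp: subspaces_between_def)
      ultimately show ?thesis by blast
    qed (use K in \<open>auto simp: subspaces_between_def\<close>)
  qed
  show "?A \<union> (\<Union>H\<in>?Hyp. ?F H - ?A) \<subseteq> ?S"
  proof
    fix K assume "K \<in> ?A \<union> (\<Union>H\<in>?Hyp. ?F H - ?A)"
    then show "K \<in> ?S"
    proof
      assume "K \<in> ?A"
      then have "K \<inter> \<Gamma> = \<Gamma>"
        by (auto simp: subspaces_between_def)
      then show "K \<in> ?S"
        using \<open>K \<in> ?A\<close> \<Gamma>(2) by (simp add: subspaces_between_def)
    next
      assume "K \<in> (\<Union>H\<in>?Hyp. ?F H - ?A)"
      then obtain H where H: "H \<in> ?Hyp" "K \<in> ?F H - ?A" by blast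
      then have "K \<inter> \<Gamma> = H"
        by (rule Int_eq_hyperplane[OF \<Gamma>])
      then show "K \<in> ?S"
        using H by (simp add: subspaces_between_def)
    qed
  qed
qed

lemma card_subspaces_meeting_in_hyperplane:
  fixes \<Gamma> :: "('a::{finite,field} ^ 'm) set" and d :: nat
  assumes \<Gamma>: "vec.subspace \<Gamma>" "vec.dim \<Gamma> = Suc g"
  defines "A \<equiv> subspaces_between \<Gamma> UNIV d" and "Hyp \<equiv> subspaces_between {0} \<Gamma> g"
  shows "card {K. vec.subspace K \<and> vec.dim K = d \<and> g \<le> vec.dim (K \<inter> \<Gamma>)} + card Hyp * card A
    = card A + (\<Sum>H\<in>Hyp. card (subspaces_between H UNIV d))"
proof -
  let ?F = "\<lambda>H. subspaces_between H UNIV d"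
  have A_subset: "A \<subseteq> ?F H" if "H \<in> Hyp" for H
    using that by (auto simp: A_def Hyp_def subspaces_between_def)
  have "card {K. vec.subspace K \<and> vec.dim K = d \<and> g \<le> vec.dim (K \<inter> \<Gamma>)}
      = card A + (\<Sum>H\<in>Hyp. card (?F H - A))"
    unfolding subspaces_meeting_in_hyperplane_eq[OF \<Gamma>] A_def[symmetric] Hyp_def[symmetric]
    by (subst card_Un_disjoint, simp, simp, blast, subst card_UN_disjoint)
      (auto simp: A_def Hyp_def dest: Int_eq_hyperplane[OF \<Gamma>])
  also have "\<dots> = card A + (\<Sum>H\<in>Hyp. card (?F H) - card A)"
    by (simp add: card_Diff_subset A_subset)
  moreover have "card A \<le> card (?F H)" if "H \<in> Hyp" for H
    using A_subset[OF that] by (simp add: card_mono)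
  then have "(\<Sum>H\<in>Hyp. card (?F H) - card A) + (\<Sum>H\<in>Hyp. card A) = (\<Sum>H\<in>Hyp. card (?F H))"
    by (subst sum.distrib[symmetric], intro sum.cong) simp_all
  ultimately show ?thesis
    by simp
qed

lemma qbinom_meeting_identity:
  fixes q :: real
  assumes "1 < q" "r \<le> M"
  shows "qbinom q M r + c * (qbinom q (Suc M) (Suc r) - qbinom q M r)
    = qbinom q M r * (1 + c * q ^ Suc r * (q ^ (M - r) - 1) / (q ^ Suc r - 1))"
proof -
  have "q ^ Suc r \<noteq> 1"
    using one_less_power[OF assms(1), of "Suc r"] by simp
  moreover have "q ^ M = q ^ r * q ^ (M - r)"
    using assms(2) by (simp flip: power_add)
  ultimately show ?thesis
    by (simp add: qbinom_Suc_Suc field_simps)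
qed

lemma card_meeting_family:
  fixes \<Gamma> :: "('a::{finite,field} ^ 'm) set"
  assumes ambient: "CARD('m) = n + 1" and "t + 2 \<le> k" "k \<le> n" and \<Gamma>: "pspace (t + 2) \<Gamma>"
  shows "real (card {K. pspace k K \<and> meets_in_at_least (t + 1) K \<Gamma>}) =
          qbinom (real CARD('a)) (n - t - 2) (k - t - 2) *
          (1 + theta (real CARD('a)) (t + 2) * real CARD('a) ^ (k - t - 1) *
               (real CARD('a) ^ (n - k) - 1) / (real CARD('a) ^ (k - t - 1) - 1))"
proof -
  let ?Q = "real CARD('a)"
  have \<Gamma>_sub: "vec.subspace \<Gamma>" "vec.dim \<Gamma> = Suc (t + 2)"
    using \<Gamma> by (auto simp: pspace_def)
  have card_through_hyperplane: "real (card (subspaces_between H UNIV (k + 1)))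
      = qbinom ?Q (Suc (n - t - 2)) (Suc (k - t - 2))"
    if "H \<in> subspaces_between {0} \<Gamma> (t + 2)" for H
    using that card_subspaces_through[of H "k + 1"] ambient assms(2,3)
    by (simp add: subspaces_between_def Suc_diff_Suc)
  have "{K. pspace k K \<and> meets_in_at_least (t + 1) K \<Gamma>}
      = {K. vec.subspace K \<and> vec.dim K = k + 1 \<and> t + 2 \<le> vec.dim (K \<inter> \<Gamma>)}"
    by (auto simp: pspace_def meets_in_at_least_def)
  then have "real (card {K. pspace k K \<and> meets_in_at_least (t + 1) K \<Gamma>})
      = qbinom ?Q (n - t - 2) (k - t - 2) + theta ?Q (t + 2)
        * (qbinom ?Q (Suc (n - t - 2)) (Suc (k - t - 2)) - qbinom ?Q (n - t - 2) (k - t - 2))"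
    using arg_cong[OF card_subspaces_meeting_in_hyperplane[OF \<Gamma>_sub, of "k + 1"], of real]
      card_subspaces_through[OF \<Gamma>_sub(1), of "k + 1"] card_hyperplanes[OF \<Gamma>_sub]
      card_through_hyperplane ambient assms(2,3) \<Gamma>_sub(2)
    by (simp add: algebra_simps)
  also have "\<dots> = qbinom ?Q (n - t - 2) (k - t - 2) * (1 + theta ?Q (t + 2) * ?Q ^ Suc (k - t - 2)
      * (?Q ^ (n - t - 2 - (k - t - 2)) - 1) / (?Q ^ Suc (k - t - 2) - 1))"
    using qbinom_meeting_identity one_less_card_field[where 'a='a] assms(3) by simp
  moreover have "Suc (k - t - 2) = k - t - 1" "n - t - 2 - (k - t - 2) = n - k"
    using assms(2,3) by auto
  ultimately show ?thesis
    by (simp only:)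
qed

theorem mainTheorem5:
  fixes \<Gamma> :: "('a::{finite,field} ^ 'm) set"
    and n k t :: nat
  assumes "CARD('m) = n + 1"
    and "k > t"
    and "n + t > 2 * k"
    and "pspace (t + 2) \<Gamma>"
  shows "maximal_t_intersecting k t {K. pspace k K \<and> meets_in_at_least (t + 1) K \<Gamma>}
     \<and> (k \<ge> t + 2 \<longrightarrow>
        real (card {K. pspace k K \<and> meets_in_at_least (t + 1) K \<Gamma>}) =
          qbinom (real CARD('a)) (n - t - 2) (k - t - 2) *
          (1 + theta (real CARD('a)) (t + 2) * real CARD('a) ^ (k - t - 1) *
               (real CARD('a) ^ (n - k) - 1) / (real CARD('a) ^ (k - t - 1) - 1)))"
proof -
  have "k \<le> n"
    using assms(2,3) by linarith
  then show ?thesis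
    using maximal_meeting_family[OF assms] card_meeting_family[OF assms(1) _ _ assms(4)] by blast
qed

end
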